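(* Let $q\equiv 3\pmod 4$ be a prime power. Let $\Psi:\mathcal{H}_2(\mathbb{F}_{q^2})\to\mathcal{H}_2(\mathbb{F}_{q^2})$ and $\Phi:\mathcal{HGL}_2(\mathbb{F}_{q^2})\to\mathcal{HGL}_2(\mathbb{F}_{q^2})$ be maps and set $\psi=\Omega^{-1}\circ\Psi\circ\Omega:\mathbb{F}_q^4\to\mathbb{F}_q^4$ and $\varphi=\omega^{-1}\circ\Phi\circ\omega:\mathbb{F}_q^4\setminus C_0\to\mathbb{F}_q^4\setminus C_0$. Then: (i) If $\Psi(A)=A+B$ for some fixed $B\in\mathcal{H}_2(\mathbb{F}_{q^2})$, then $\psi(\mathbf{r})=\mathbf{r}+\mathbf{r}_0$ for some $\mathbf{r}_0\in\mathbb{F}_q^4$. (ii) If $\Phi(A)=A^{-1}$, then $\varphi(\mathbf{r})=\frac{L\mathbf{r}}{(\mathbf{r},\mathbf{r})}$ for some Lorentz matrix $L$. (iii) If $\Psi(A)=A^\sigma$ for some field automorphism $\sigma$ of $\mathbb{F}_{q^2}$ (applied entry-wise), then $\psi(\mathbf{r})=L\mathbf{r}^\tau$ for some Lorentz matrix $L$ and some automorphism $\tau$ of $\mathbb{F}_q$ (applied coordinate-wise). (iv) If $\Psi(A)=PAP^\ast$ for some invertible $2\times2$ matrix $P$ such that $\det P\,\overline{\det P}$ is a square in $\mathbb{F}_q$, then $\psi(\mathbf{r})=\alpha L\mathbf{r}$ for some Lorentz matrix $L$ and nonzero $\alpha\in\mathbb{F}_q$. (v) If $\Psi(A)=PAP^\ast$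 for some invertible $P$ such that $\det P\,\overline{\det P}$ is not a square in $\mathbb{F}_q$, then $\psi(\mathbf{r})=\alpha K\mathbf{r}$ for some anti-Lorentz matrix $K$ and nonzero $\alpha\in\mathbb{F}_q$.
   Context: $\mathbb{F}_{q^2}$ is the field with $q^2$ elements, with involution $\bar x=x^q$ whose fixed field is $\mathbb{F}_q$; $X^\ast=\bar X^\top$; $\mathcal{H}_2(\mathbb{F}_{q^2})$ is the set of $2\times2$ hermitian ($A^\ast=A$) matrices and $\mathcal{HGL}_2(\mathbb{F}_{q^2})$ its invertible elements. Since $q\equiv3\pmod4$, $-1$ is not a square in $\mathbb{F}_q$; fix $\imath\in\mathbb{F}_{q^2}$ with $\imath^2=-1$. For $\mathbf{r}_k=(x_k,y_k,z_k,t_k)^\top\in\mathbb{F}_q^4$ put $(\mathbf{r}_1,\mathbf{r}_2)=-x_1x_2-y_1y_2-z_1z_2+t_1t_2$, and $C_0=\{\mathbf{r}:(\mathbf{r},\mathbf{r})=0\}$. A $4\times4$ matrix $L$ over $\mathbb{F}_q$ is Lorentz if $(L\mathbf{r}_1,L\mathbf{r}_2)=(\mathbf{r}_1,\mathbf{r}_2)$ for all $\mathbf{r}_1,\mathbf{r}_2$, and anti-Lorentz if $(L\mathbf{r}_1,L\mathbf{r}_2)=-(\mathbf{r}_1,\mathbf{r}_2)$ for all $\mathbf{r}_1,\mathbf{r}_2$. $\Omega:\mathbb{F}_q^4\to\mathcal{H}_2(\mathbb{F}_{q^2})$ is the bijection $\Omega((x,y,z,t)^\top)=\begin{bmatrix}t+x&y+\imath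 z\\ y-\imath z&t-x\end{bmatrix}$, which maps $\mathbb{F}_q^4\setminus C_0$ bijectively onto $\mathcal{HGL}_2(\mathbb{F}_{q^2})$; $\omega$ is this restriction. *)

theory Defs
  imports "HOL-Analysis.Analysis"
begin

text \<open>The field F_{q^2} is a finite field type 'k with CARD('k) = q^2.
  Involution: bar x = x^q; F_q is its fixed field.\<close>

definition cnj :: "nat \<Rightarrow> 'k::field \<Rightarrow> 'k" where
  "cnj q x = x ^ q"

definition Fq :: "nat \<Rightarrow> 'k::field set" where
  "Fq q = {x. x ^ q = x}"

definition Fq4 :: "nat \<Rightarrow> ('k::field ^ 4) set" where
  "Fq4 q = {r. \<forall>i. r $ i \<in> Fq q}"

definition adjm :: "nat \<Rightarrow> 'k::field ^ 2 ^ 2 \<Rightarrow> 'k ^ 2 ^ 2" where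
  "adjm q X = (\<chi> i j. cnj q (X $ j $ i))"

definition H2 :: "nat \<Rightarrow> ('k::field ^ 2 ^ 2) set" where
  "H2 q = {A. adjm q A = A}"

definition HGL2 :: "nat \<Rightarrow> ('k::field ^ 2 ^ 2) set" where
  "HGL2 q = {A. A \<in> H2 q \<and> invertible A}"

text \<open>Minkowski form (r1,r2) = -x1x2 - y1y2 - z1z2 + t1t2, coordinates (x,y,z,t) = (r$1,r$2,r$3,r$4)\<close>
definition mink :: "'k::field ^ 4 \<Rightarrow> 'k ^ 4 \<Rightarrow> 'k" where
  "mink r1 r2 = - (r1$1 * r2$1) - (r1$2 * r2$2) - (r1$3 * r2$3) + (r1$4 * r2$4)"

definition C0 :: "nat \<Rightarrow> ('k::field ^ 4) set" where
  "C0 q = {r \<in> Fq4 q. mink r r = 0}"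

definition mat2 :: "'k \<Rightarrow> 'k \<Rightarrow> 'k \<Rightarrow> 'k \<Rightarrow> 'k ^ 2 ^ 2" where
  "mat2 a b c d = (\<chi> i j. if i = 1 then (if j = 1 then a else b) else (if j = 1 then c else d))"

text \<open>Omega((x,y,z,t)) = [[t+x, y + i z],[y - i z, t - x]] for a fixed square root i of -1\<close>
definition Omega :: "'k::field \<Rightarrow> 'k ^ 4 \<Rightarrow> 'k ^ 2 ^ 2" where
  "Omega ii r = mat2 (r$4 + r$1) (r$2 + ii * r$3) (r$2 - ii * r$3) (r$4 - r$1)"

definition psi_of :: "nat \<Rightarrow> 'k::field \<Rightarrow> ('k ^ 2 ^ 2 \<Rightarrow> 'k ^ 2 ^ 2) \<Rightarrow> 'k ^ 4 \<Rightarrow> 'k ^ 4" where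
  "psi_of q ii Psi = inv_into (Fq4 q) (Omega ii) \<circ> Psi \<circ> Omega ii"

definition phi_of :: "nat \<Rightarrow> 'k::field \<Rightarrow> ('k ^ 2 ^ 2 \<Rightarrow> 'k ^ 2 ^ 2) \<Rightarrow> 'k ^ 4 \<Rightarrow> 'k ^ 4" where
  "phi_of q ii Phi = inv_into (Fq4 q - C0 q) (Omega ii) \<circ> Phi \<circ> Omega ii"

definition lorentz :: "nat \<Rightarrow> 'k::field ^ 4 ^ 4 \<Rightarrow> bool" where
  "lorentz q L \<longleftrightarrow> (\<forall>i j. L $ i $ j \<in> Fq q) \<and>
     (\<forall>r1 \<in> Fq4 q. \<forall>r2 \<in> Fq4 q. mink (L *v r1) (L *v r2) = mink r1 r2)"

definition anti_lorentz :: "nat \<Rightarrow> 'k::field ^ 4 ^ 4 \<Rightarrow> bool" where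
  "anti_lorentz q L \<longleftrightarrow> (\<forall>i j. L $ i $ j \<in> Fq q) \<and>
     (\<forall>r1 \<in> Fq4 q. \<forall>r2 \<in> Fq4 q. mink (L *v r1) (L *v r2) = - mink r1 r2)"

definition field_aut :: "('k::field \<Rightarrow> 'k) \<Rightarrow> bool" where
  "field_aut s \<longleftrightarrow> bij s \<and> (\<forall>x y. s (x + y) = s x + s y) \<and> (\<forall>x y. s (x * y) = s x * s y)"

definition Fq_aut :: "nat \<Rightarrow> ('k::field \<Rightarrow> 'k) \<Rightarrow> bool" where
  "Fq_aut q t \<longleftrightarrow> bij_betw t (Fq q) (Fq q) \<and>
     (\<forall>x \<in> Fq q. \<forall>y \<in> Fq q. t (x + y) = t x + t y \<and> t (x * y) = t x * t y)"

definition prime_power :: "nat \<Rightarrow> bool" where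
  "prime_power q \<longleftrightarrow> (\<exists>p k. prime p \<and> k > 0 \<and> q = p ^ k)"

end

theory Submission
  imports Defs "HOL-Number_Theory.Residues"
begin

text \<open>
  \<Omega> is additive and \<open>\<bbbF>\<^sub>q\<close>-homogeneous, it has an explicit inverse on hermitian matrices, and
  \<open>det (\<Omega> r) = (r, r)\<close>. Hence (i) translations go to translations; (ii) \<open>A\<inverse> = adj A / det A\<close>
  and \<open>adj (\<Omega> r) = \<Omega> (\<eta> r)\<close> for the Minkowski metric \<open>\<eta> = diag(-1,-1,-1,1)\<close>; (iii) \<sigma> maps
  \<open>\<bbbF>\<^sub>q\<close> onto itself and \<open>\<imath>\<close> to \<open>\<plusminus>\<imath>\<close>, so \<psi> is \<sigma> applied coordinatewise followed by
  \<open>diag(1,1,\<plusminus>1,1)\<close>. (iv), (v) \<open>A \<mapsto> P A P\<^sup>*\<close> is \<open>\<bbbF>\<^sub>q\<close>-linear and multiplies determinants by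
  \<open>N = det P \<cdot> det P\<^sup>q \<in> \<bbbF>\<^sub>q\<^sup>*\<close>, so by polarisation \<psi> multiplies the Minkowski form by \<open>N\<close>.
  Since \<open>q \<equiv> 3 mod 4\<close>, \<open>-1\<close> is a nonsquare in \<open>\<bbbF>\<^sub>q\<close>, and the nonsquares form a single coset of
  the squares; thus \<open>N = \<plusminus>\<alpha>\<^sup>2\<close>, and dividing \<psi> by \<open>\<alpha>\<close> leaves a Lorentz or anti-Lorentz matrix.
\<close>

lemma finite_field_power_card:
  fixes x :: "'a::{field,finite}"
  shows "x ^ CARD('a) = x"
proof (cases "x = 0")
  case True
  then show ?thesis by (simp add: finite_UNIV_card_ge_0)
next
  case False
  define U where "U = UNIV - {0::'a}"
  have "prod id U = (\<Prod>y\<in>U. x * y)"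
    by (rule prod.reindex_bij_witness[of _ "\<lambda>y. x * y" "\<lambda>y. y / x"]) (use False in \<open>auto simp: U_def\<close>)
  also have "\<dots> = x ^ card U * prod id U"
    by (simp add: prod.distrib)
  finally have "1 * prod id U = x ^ card U * prod id U"
    by simp
  moreover have "prod id U \<noteq> 0"
    by (simp add: U_def)
  ultimately have "x ^ card U = 1"
    by (simp only: mult_cancel_right) simp
  moreover have "CARD('a) = Suc (card U)"
    by (simp add: U_def card_Diff_singleton finite_UNIV_card_ge_0 Suc_diff_1)
  ultimately show ?thesis by simp
qed

definition vec4 :: "'a \<Rightarrow> 'a \<Rightarrow> 'a \<Rightarrow> 'a \<Rightarrow> 'a ^ 4" where
  "vec4 a b c d = (\<chi> i. if i = 1 then a else if i = 2 then b else if i = 3 then c else d)"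

lemma vec4_nth [simp]:
  "vec4 a b c d $ 1 = a" "vec4 a b c d $ 2 = b" "vec4 a b c d $ 3 = c" "vec4 a b c d $ 4 = d"
  by (simp_all add: vec4_def)

lemma mat2_nth [simp]:
  "mat2 a b c d $ 1 $ 1 = a" "mat2 a b c d $ 1 $ 2 = b" "mat2 a b c d $ 2 $ 1 = c" "mat2 a b c d $ 2 $ 2 = d"
  by (simp_all add: mat2_def)

lemma vec4_eq_iff: "(x :: 'a ^ 4) = y \<longleftrightarrow> x$1 = y$1 \<and> x$2 = y$2 \<and> x$3 = y$3 \<and> x$4 = y$4"
  by (simp add: vec_eq_iff forall_4)

lemma mat2_eq_iff: "(A :: 'a ^ 2 ^ 2) = B \<longleftrightarrow> A$1$1 = B$1$1 \<and> A$1$2 = B$1$2 \<and> A$2$1 = B$2$1 \<and> A$2$2 = B$2$2"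
  by (simp add: vec_eq_iff forall_2)

lemma mat2_mult_mat2:
  "(mat2 a b c d :: 'a::comm_semiring_1^2^2) ** mat2 e f g h = mat2 (a*e+b*g) (a*f+b*h) (c*e+d*g) (c*f+d*h)"
  by (simp add: mat2_eq_iff matrix_matrix_mult_def sum_2)

lemma mat2_mult_adjugate:
  "(mat2 a b c d :: 'a::comm_ring_1^2^2) ** mat2 d (-b) (-c) a = mat2 (a*d-b*c) 0 0 (a*d-b*c)"
  by (simp add: mat2_mult_mat2 algebra_simps)

lemma mat_1_eq_mat2: "(mat 1 :: 'a::{zero,one}^2^2) = mat2 1 0 0 1"
  by (simp add: mat2_eq_iff mat_def)

definition smat :: "'a::times \<Rightarrow> 'a^'n^'m \<Rightarrow> 'a^'n^'m" where
  "smat a M = (\<chi> i j. a * M$i$j)"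

lemma matrix_mul_smat_right: "(A :: 'a::comm_semiring_1^'n^'m) ** smat k B = smat k (A ** B)"
  by (simp add: smat_def matrix_matrix_mult_def vec_eq_iff sum_distrib_left algebra_simps)

lemma matrix_mul_smat_left: "smat k (A :: 'a::comm_semiring_1^'n^'m) ** B = smat k (A ** B)"
  by (simp add: smat_def matrix_matrix_mult_def vec_eq_iff sum_distrib_left algebra_simps)

lemma matrix_add_rdistrib: "(A + B) ** (C :: 'a::semiring_1^_^_) = A ** C + B ** C"
  by (vector matrix_matrix_mult_def sum.distrib[symmetric] field_simps)

lemma matrix_inv_eqI:
  fixes A :: "'a::field^'n^'n"
  assumes "invertible A" and "A ** B = mat 1"
  shows "matrix_inv A = B"
proof -
  have left_inverse: "matrix_inv A ** A = mat 1"
    using someI_ex[OF assms(1)[unfolded invertible_def]] by (simp add: matrix_inv_def)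
  have "matrix_inv A = matrix_inv A ** (A ** B)"
    using assms(2) by simp
  also have "\<dots> = (matrix_inv A ** A) ** B"
    by (rule matrix_mul_assoc)
  finally show ?thesis
    using left_inverse by simp
qed

lemma matrix_works_additive_homogeneous:
  fixes f :: "'a::field^'n \<Rightarrow> 'a^'m"
  assumes "\<And>x y. f (x + y) = f x + f y" and "\<And>c x. f (c *s x) = c *s f x"
  shows "matrix f *v x = f x"
  by (rule matrix_works) (simp add: Vector_Spaces.linear_iff vec.vector_space_axioms assms)

definition diag_mat :: "('n \<Rightarrow> 'a::zero) \<Rightarrow> 'a^'n^'n" where
  "diag_mat d = (\<chi> i j. if i = j then d i else 0)"

lemma diag_mat_mult: "diag_mat d *v r = (\<chi> i. d i * r $ i)"
  by (simp add: diag_mat_def matrix_vector_mult_def vec_eq_iff if_distrib if_distribR cong: if_cong)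

definition minkowski_metric :: "'a::{zero,one,uminus}^4^4" where
  "minkowski_metric = diag_mat (\<lambda>i. if i = 4 then 1 else -1)"

lemma mink_scale: "mink (a *s x) (b *s y) = a * b * mink x y"
  by (simp add: mink_def algebra_simps)

lemma mink_add_self: "mink (x + y) (x + y) = mink x x + 2 * mink x y + mink y y"
  by (simp add: mink_def algebra_simps)

lemma mink_polarization:
  fixes F :: "'a::field^4 \<Rightarrow> 'a^4"
  assumes "(2::'a) \<noteq> 0" and add: "\<And>x y. F (x + y) = F x + F y"
    and quadratic: "\<And>r. mink (F r) (F r) = c * mink r r"
  shows "mink (F r1) (F r2) = c * mink r1 r2"
proof -
  have "2 * mink (F r1) (F r2) = mink (F (r1 + r2)) (F (r1 + r2)) - mink (F r1) (F r1) - mink (F r2) (F r2)"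
    by (simp add: add mink_add_self)
  also have "\<dots> = 2 * (c * mink r1 r2)"
    by (simp add: quadratic mink_add_self algebra_simps)
  finally show ?thesis using assms(1) by simp
qed

lemma field_aut_zero: "field_aut \<sigma> \<Longrightarrow> \<sigma> 0 = 0"
  by (metis add.right_neutral add_left_cancel field_aut_def)

lemma field_aut_one:
  assumes "field_aut \<sigma>" shows "\<sigma> 1 = 1"
proof -
  have "\<sigma> 1 \<noteq> 0"
    using assms field_aut_zero[OF assms] by (metis bij_def field_aut_def injD one_neq_zero)
  moreover have "\<sigma> 1 * \<sigma> 1 = \<sigma> 1 * 1"
    using assms by (metis field_aut_def mult_1 mult_1_right)
  ultimately show ?thesis by simp
qed

lemma field_aut_minus: "field_aut \<sigma> \<Longrightarrow> \<sigma> (- x) = - \<sigma> x"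
  by (metis add.right_inverse eq_neg_iff_add_eq_0 field_aut_def field_aut_zero)

lemma field_aut_diff: "field_aut \<sigma> \<Longrightarrow> \<sigma> (x - y) = \<sigma> x - \<sigma> y"
  by (metis diff_conv_add_uminus field_aut_def field_aut_minus)

lemma field_aut_power: "field_aut \<sigma> \<Longrightarrow> \<sigma> (x ^ n) = \<sigma> x ^ n"
  by (induction n) (simp_all add: field_aut_one field_aut_def)

lemma field_aut_sqrt_neg_one:
  assumes "field_aut \<sigma>" and "i * i = -1"
  shows "\<sigma> i = i \<or> \<sigma> i = - i"
proof -
  have "\<sigma> i * \<sigma> i = -1"
    using assms by (metis field_aut_def field_aut_minus field_aut_one)
  then have "(\<sigma> i - i) * (\<sigma> i + i) = 0"
    using assms(2) by (simp add: algebra_simps)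
  then show ?thesis by (simp add: eq_neg_iff_add_eq_0)
qed

locale hermitian_Fq2 =
  fixes q :: nat and ii :: "'k::{field,finite}"
  assumes prime_power_q: "prime_power q" and q_mod_4: "q mod 4 = 3" and card_k: "CARD('k) = q ^ 2"
    and ii_squared: "ii ^ 2 = -1"
begin

lemma prime_CHAR: "prime CHAR('k)"
  by (rule prime_CHAR_semidom) (simp add: finite_imp_CHAR_pos)

lemma q_power_of_CHAR: "\<exists>n. q = CHAR('k) ^ n"
proof -
  obtain p k where p: "prime p" "k > 0" "q = p ^ k"
    using prime_power_q unfolding prime_power_def by auto
  have "CHAR('k) dvd p ^ (2*k)"
    using CHAR_dvd_CARD[where 'a='k] card_k p(3) by (simp add: power_mult[symmetric] mult.commute)
  then have "CHAR('k) = p"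
    using p(1) prime_CHAR prime_dvd_power primes_dvd_imp_eq by blast
  then show ?thesis using p by auto
qed

lemma q_odd: "odd q"
proof
  assume "even q"
  then have "q mod 4 mod 2 = 0"
    by (simp add: mod_mod_cancel)
  then show False
    using q_mod_4 by simp
qed

lemma q_pos: "q > 0"
  using q_odd by (cases q) auto

lemma two_neq_zero: "(2::'k) \<noteq> 0"
proof
  assume "(2::'k) = 0"
  then have "CHAR('k) dvd 2"
    by (metis of_nat_eq_0_iff_char_dvd of_nat_numeral)
  then have "CHAR('k) = 2"
    using prime_CHAR by (simp add: primes_dvd_imp_eq)
  then obtain n where n: "q = 2 ^ n"
    using q_power_of_CHAR by auto
  with q_mod_4 have "n > 0"
    by (cases n) auto
  with n q_odd show False
    by simp
qed

lemma frobenius_add: "(x + y :: 'k) ^ q = x ^ q + y ^ q"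
  using q_power_of_CHAR prime_CHAR freshmans_dream' by blast

lemma frobenius_sum: "(sum f A :: 'k) ^ q = (\<Sum>i\<in>A. f i ^ q)"
  using q_power_of_CHAR prime_CHAR freshmans_dream_sum' by blast

lemma frobenius_minus: "(- x :: 'k) ^ q = - (x ^ q)"
  using q_odd by (simp add: power_minus_odd)

lemma frobenius_diff: "(x - y :: 'k) ^ q = x ^ q - y ^ q"
  using frobenius_add[of x "-y"] frobenius_minus by simp

lemma frobenius_frobenius: "((x::'k) ^ q) ^ q = x"
  using finite_field_power_card[of x] card_k by (simp add: power_mult[symmetric] power2_eq_square)

lemma ii_power_q: "ii ^ q = - ii"
proof -
  have "ii ^ 4 = 1"
    using ii_squared by (metis minus_one_mult_self numeral_Bit0 power_add power2_eq_square)
  moreover have "q = 4 * (q div 4) + 3"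
    using q_mod_4 by (metis mod_mult_div_eq add.commute)
  ultimately have "ii ^ q = ii ^ 3"
    by (metis power_add power_mult power_one mult_1)
  also have "\<dots> = - ii"
    using ii_squared by (simp add: power3_eq_cube power2_eq_square)
  finally show ?thesis .
qed

lemma ii_mult_ii: "ii * ii = -1"
  using ii_squared by (simp add: power2_eq_square)

lemma ii_mult_ii_mult: "ii * (ii * x) = - x"
  by (simp add: mult.assoc[symmetric] ii_mult_ii)

lemma ii_neq_zero: "ii \<noteq> 0"
  using ii_squared by auto

lemma Fq_iff_cnj: "(x::'k) \<in> Fq q \<longleftrightarrow> cnj q x = x"
  by (simp add: Fq_def cnj_def)

lemma Fq_0 [simp]: "(0::'k) \<in> Fq q"
  using q_pos by (simp add: Fq_def)

lemma Fq_1 [simp]: "(1::'k) \<in> Fq q"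
  by (simp add: Fq_def)

lemma Fq_add [simp]: "x \<in> Fq q \<Longrightarrow> y \<in> Fq q \<Longrightarrow> (x + y :: 'k) \<in> Fq q"
  by (simp add: Fq_def frobenius_add)

lemma Fq_mult [simp]: "x \<in> Fq q \<Longrightarrow> y \<in> Fq q \<Longrightarrow> (x * y :: 'k) \<in> Fq q"
  by (simp add: Fq_def power_mult_distrib)

lemma Fq_minus [simp]: "x \<in> Fq q \<Longrightarrow> (- x :: 'k) \<in> Fq q"
  by (simp add: Fq_def frobenius_minus)

lemma Fq_diff [simp]: "x \<in> Fq q \<Longrightarrow> y \<in> Fq q \<Longrightarrow> (x - y :: 'k) \<in> Fq q"
  by (simp add: Fq_def frobenius_diff)

lemma Fq_divide [simp]: "x \<in> Fq q \<Longrightarrow> y \<in> Fq q \<Longrightarrow> (x / y :: 'k) \<in> Fq q"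
  by (simp add: Fq_def power_divide)

lemma Fq_2 [simp]: "(2::'k) \<in> Fq q"
  using Fq_add[OF Fq_1 Fq_1] by (simp add: one_add_one)

lemma Fq_power [simp]: "x \<in> Fq q \<Longrightarrow> (x ^ n :: 'k) \<in> Fq q"
  by (induction n) auto

lemma ii_notin_Fq: "ii \<notin> Fq q"
  using ii_power_q two_neq_zero ii_neq_zero by (auto simp: Fq_def)

lemma cnj_add [simp]: "cnj q (x + y :: 'k) = cnj q x + cnj q y"
  by (simp add: cnj_def frobenius_add)

lemma cnj_diff [simp]: "cnj q (x - y :: 'k) = cnj q x - cnj q y"
  by (simp add: cnj_def frobenius_diff)

lemma cnj_mult [simp]: "cnj q (x * y :: 'k) = cnj q x * cnj q y"
  by (simp add: cnj_def power_mult_distrib)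

lemma cnj_divide [simp]: "cnj q (x / y :: 'k) = cnj q x / cnj q y"
  by (simp add: cnj_def power_divide)

lemma cnj_cnj [simp]: "cnj q (cnj q (x :: 'k)) = x"
  by (simp add: cnj_def frobenius_frobenius)

lemma cnj_ii [simp]: "cnj q ii = - ii"
  by (simp add: cnj_def ii_power_q)

lemma cnj_2 [simp]: "cnj q (2::'k) = 2"
  using Fq_2 Fq_iff_cnj by blast

lemma cnj_sum: "cnj q (sum f A :: 'k) = (\<Sum>i\<in>A. cnj q (f i))"
  by (simp add: cnj_def frobenius_sum)

lemma norm_in_Fq: "(x::'k) * cnj q x \<in> Fq q"
  by (simp add: Fq_iff_cnj mult.commute)

lemma norm_neq_zero: "(x::'k) \<noteq> 0 \<Longrightarrow> x * cnj q x \<noteq> 0"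
  by (simp add: cnj_def)

lemma lorentz_diag_mat:
  fixes d :: "4 \<Rightarrow> 'k"
  assumes "\<And>i. d i \<in> Fq q" and "\<And>i. d i * d i = 1"
  shows "lorentz q (diag_mat d)"
proof -
  have d_square: "d i * x * (d i * y) = x * y" for i and x y :: 'k
    by (metis assms(2) mult.assoc mult.left_commute mult_1)
  have "mink (diag_mat d *v r1) (diag_mat d *v r2) = mink r1 r2" for r1 r2 :: "'k^4"
    by (simp add: diag_mat_mult mink_def d_square)
  then show ?thesis
    using assms(1) by (simp add: lorentz_def diag_mat_def)
qed

lemma Fq4_iff: "(r::'k^4) \<in> Fq4 q \<longleftrightarrow> r$1 \<in> Fq q \<and> r$2 \<in> Fq q \<and> r$3 \<in> Fq q \<and> r$4 \<in> Fq q"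
  by (simp add: Fq4_def forall_4)

lemma H2_iff:
  "(A::'k^2^2) \<in> H2 q \<longleftrightarrow> cnj q (A$1$1) = A$1$1 \<and> cnj q (A$2$2) = A$2$2 \<and> cnj q (A$1$2) = A$2$1"
  unfolding H2_def adjm_def vec_eq_iff forall_2 by (auto simp: vec_lambda_beta) (metis cnj_cnj)

lemma adjm_mult: "adjm q ((A::'k^2^2) ** B) = adjm q B ** adjm q A"
  by (simp add: adjm_def matrix_matrix_mult_def vec_eq_iff cnj_sum mult.commute)

lemma adjm_adjm [simp]: "adjm q (adjm q (A::'k^2^2)) = A"
  by (simp add: adjm_def vec_eq_iff)

lemma det_adjm: "det (adjm q (P::'k^2^2)) = cnj q (det P)"
  by (simp add: det_2 adjm_def)

lemma congruence_in_H2: "(X::'k^2^2) \<in> H2 q \<Longrightarrow> P ** X ** adjm q P \<in> H2 q"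
  unfolding H2_def by (simp add: adjm_mult matrix_mul_assoc)

definition Omega_inv :: "'k^2^2 \<Rightarrow> 'k^4" where
  "Omega_inv A = vec4 ((A$1$1 - A$2$2)/2) ((A$1$2 + A$2$1)/2) ((A$1$2 - A$2$1)/(2*ii)) ((A$1$1 + A$2$2)/2)"

lemma Omega_inv_Omega [simp]: "Omega_inv (Omega ii r) = r"
  using two_neq_zero ii_neq_zero by (simp add: Omega_inv_def Omega_def vec4_eq_iff field_simps)

lemma Omega_Omega_inv [simp]: "Omega ii (Omega_inv A) = A"
  using two_neq_zero ii_neq_zero mult_eq_0_iff[of "2::'k" 2]
  by (simp add: Omega_inv_def Omega_def mat2_eq_iff field_simps ii_mult_ii)

lemma inj_Omega: "inj (Omega ii)"
  by (metis Omega_inv_Omega injI)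

lemma Omega_add: "Omega ii (x + y) = Omega ii x + Omega ii y"
  by (simp add: Omega_def mat2_eq_iff algebra_simps)

lemma Omega_scale: "Omega ii (a *s x) = smat a (Omega ii x)"
  by (simp add: Omega_def mat2_eq_iff smat_def algebra_simps)

lemma Omega_inv_add: "Omega_inv (A + B) = Omega_inv A + Omega_inv B"
  by (simp add: Omega_inv_def vec4_eq_iff add_divide_distrib[symmetric] diff_divide_distrib[symmetric] algebra_simps)

lemma Omega_inv_smat: "Omega_inv (smat a A) = a *s Omega_inv A"
  by (simp add: Omega_inv_def vec4_eq_iff smat_def algebra_simps)

lemma det_Omega: "det (Omega ii r) = mink r r"
  by (simp add: det_2 Omega_def mink_def algebra_simps ii_mult_ii ii_mult_ii_mult)

lemma Omega_in_H2: "r \<in> Fq4 q \<Longrightarrow> Omega ii r \<in> H2 q"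
  by (simp add: H2_iff Fq4_iff Omega_def Fq_iff_cnj)

lemma Omega_inv_in_Fq4:
  assumes "(A::'k^2^2) \<in> H2 q" shows "Omega_inv A \<in> Fq4 q"
proof -
  have "cnj q (A$1$1) = A$1$1" "cnj q (A$2$2) = A$2$2" "cnj q (A$1$2) = A$2$1" "cnj q (A$2$1) = A$1$2"
    using assms H2_iff by (auto, metis cnj_cnj)
  moreover have "- ((A$2$1 - A$1$2) / (ii * 2)) = (A$1$2 - A$2$1) / (ii * (2::'k))"
    by (simp only: minus_divide_left minus_diff_eq)
  ultimately show ?thesis
    using two_neq_zero by (simp add: Fq4_iff Omega_inv_def Fq_iff_cnj field_simps)
qed

lemma psi_of_eqI:
  assumes "r \<in> Fq4 q" and "s \<in> Fq4 q" and "Psi (Omega ii r) = Omega ii s"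
  shows "psi_of q ii Psi r = s"
  using assms by (simp add: psi_of_def inv_into_f_f inj_on_subset[OF inj_Omega])

lemma phi_of_eqI:
  assumes "r \<in> Fq4 q - C0 q" and "s \<in> Fq4 q - C0 q" and "Phi (Omega ii r) = Omega ii s"
  shows "phi_of q ii Phi r = s"
  using assms by (simp add: phi_of_def inv_into_f_f inj_on_subset[OF inj_Omega])

lemma psi_translation:
  assumes "B \<in> H2 q" and "\<forall>A \<in> H2 q. Psi A = A + B"
  shows "\<exists>r0 \<in> Fq4 q. \<forall>r \<in> Fq4 q. psi_of q ii Psi r = r + r0"
proof (intro bexI ballI)
  show "Omega_inv B \<in> Fq4 q"
    using assms(1) by (rule Omega_inv_in_Fq4)
  fix r :: "'k^4"
  assume r: "r \<in> Fq4 q"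
  show "psi_of q ii Psi r = r + Omega_inv B"
  proof (rule psi_of_eqI[OF r])
    show "r + Omega_inv B \<in> Fq4 q"
      using r Omega_inv_in_Fq4[OF assms(1)] by (simp add: Fq4_iff)
    show "Psi (Omega ii r) = Omega ii (r + Omega_inv B)"
      using assms(2) Omega_in_H2[OF r] by (simp add: Omega_add)
  qed
qed

lemma lorentz_minkowski_metric: "lorentz q (minkowski_metric :: 'k^4^4)"
  unfolding minkowski_metric_def by (intro lorentz_diag_mat) auto

lemma Omega_mult_Omega_minkowski_metric:
  "Omega ii r ** Omega ii (minkowski_metric *v r) = mat2 (mink r r) 0 0 (mink r r)"
proof -
  have "Omega ii r ** Omega ii (minkowski_metric *v r) =
      mat2 (r$4 + r$1) (r$2 + ii*r$3) (r$2 - ii*r$3) (r$4 - r$1) **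
      mat2 (r$4 - r$1) (-(r$2 + ii*r$3)) (-(r$2 - ii*r$3)) (r$4 + r$1)"
    by (simp add: Omega_def minkowski_metric_def diag_mat_mult algebra_simps)
  also have "\<dots> = mat2 (mink r r) 0 0 (mink r r)"
    unfolding mat2_mult_adjugate by (simp add: mink_def algebra_simps ii_mult_ii ii_mult_ii_mult)
  finally show ?thesis .
qed

lemma phi_matrix_inv:
  assumes "\<forall>A \<in> HGL2 q. Phi A = matrix_inv A"
  shows "\<exists>L. lorentz q L \<and> (\<forall>r \<in> Fq4 q - C0 q. phi_of q ii Phi r = (1 / mink r r) *s (L *v r))"
proof (intro exI conjI ballI)
  show "lorentz q (minkowski_metric :: 'k^4^4)"
    by (rule lorentz_minkowski_metric)
  fix r :: "'k^4"
  assume r: "r \<in> Fq4 q - C0 q"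
  define m where "m = mink r r"
  define s where "s = (1 / m) *s (minkowski_metric *v r)"
  have rF: "r \<in> Fq4 q" and m0: "m \<noteq> 0"
    using r by (auto simp: C0_def m_def)
  have "mink (minkowski_metric *v r) (minkowski_metric *v r) = m"
    by (simp add: minkowski_metric_def diag_mat_mult mink_def m_def)
  then have "mink s s \<noteq> 0"
    using m0 by (simp add: s_def mink_scale)
  moreover have "s \<in> Fq4 q"
    using rF by (simp add: s_def m_def minkowski_metric_def diag_mat_mult Fq4_iff mink_def)
  ultimately have s: "s \<in> Fq4 q - C0 q"
    by (simp add: C0_def)
  have "invertible (Omega ii r)"
    using m0 by (simp add: invertible_det_nz det_Omega m_def)
  moreover have "Omega ii r ** Omega ii s = smat (1 / m) (mat2 m 0 0 m)"
    by (simp add: s_def Omega_scale matrix_mul_smat_right Omega_mult_Omega_minkowski_metric m_def)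
  moreover have "smat (1 / m) (mat2 m 0 0 m) = mat 1"
    using m0 by (simp add: smat_def mat2_eq_iff mat_1_eq_mat2)
  ultimately have "Phi (Omega ii r) = Omega ii s"
    using assms Omega_in_H2[OF rF] by (simp add: HGL2_def matrix_inv_eqI)
  then show "phi_of q ii Phi r = (1 / mink r r) *s (minkowski_metric *v r)"
    using phi_of_eqI[OF r s] by (simp add: s_def m_def)
qed

lemma field_aut_in_Fq: "field_aut \<sigma> \<Longrightarrow> (x::'k) \<in> Fq q \<Longrightarrow> \<sigma> x \<in> Fq q"
  by (simp add: Fq_def field_aut_power[symmetric])

lemma field_aut_imp_Fq_aut:
  assumes "field_aut (\<sigma> :: 'k \<Rightarrow> 'k)" shows "Fq_aut q \<sigma>"
proof -
  have inj: "inj_on \<sigma> (Fq q)"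
    using assms by (meson bij_def field_aut_def inj_on_subset subset_UNIV)
  then have "\<sigma> ` Fq q = Fq q"
    using assms by (intro endo_inj_surj) (simp_all add: field_aut_in_Fq image_subset_iff)
  then show ?thesis
    using assms inj by (simp add: Fq_aut_def bij_betw_def field_aut_def)
qed

lemma psi_entrywise_aut:
  assumes \<sigma>: "field_aut \<sigma>" and Psi: "\<forall>A \<in> H2 q. Psi A = (\<chi> i j. \<sigma> (A $ i $ j))"
  shows "\<exists>L \<tau>. lorentz q L \<and> Fq_aut q \<tau> \<and> (\<forall>r \<in> Fq4 q. psi_of q ii Psi r = L *v (\<chi> i. \<tau> (r $ i)))"
proof (intro exI conjI ballI)
  define e :: 'k where "e = (if \<sigma> ii = ii then 1 else -1)"
  define L :: "'k^4^4" where "L = diag_mat (\<lambda>i. if i = 3 then e else 1)"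
  have e_ii: "\<sigma> ii = e * ii"
    using field_aut_sqrt_neg_one[OF \<sigma> ii_mult_ii] by (auto simp: e_def)
  show "lorentz q L"
    unfolding L_def by (rule lorentz_diag_mat) (auto simp: e_def)
  show "Fq_aut q \<sigma>"
    using \<sigma> by (rule field_aut_imp_Fq_aut)
  fix r :: "'k^4"
  assume r: "r \<in> Fq4 q"
  show "psi_of q ii Psi r = L *v (\<chi> i. \<sigma> (r $ i))"
  proof (rule psi_of_eqI[OF r])
    show "L *v (\<chi> i. \<sigma> (r $ i)) \<in> Fq4 q"
      using r \<sigma> by (simp add: L_def diag_mat_mult Fq4_iff e_def field_aut_in_Fq)
    show "Psi (Omega ii r) = Omega ii (L *v (\<chi> i. \<sigma> (r $ i)))"
      using Psi Omega_in_H2[OF r] \<sigma>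
      by (simp add: Omega_def L_def diag_mat_mult mat2_eq_iff field_aut_diff \<sigma>[unfolded field_aut_def] e_ii)
  qed
qed

definition congruence_vec :: "'k^2^2 \<Rightarrow> 'k^4 \<Rightarrow> 'k^4" where
  "congruence_vec P r = Omega_inv (P ** Omega ii r ** adjm q P)"

lemma congruence_vec_add: "congruence_vec P (x + y) = congruence_vec P x + congruence_vec P y"
  by (simp add: congruence_vec_def Omega_add matrix_add_ldistrib matrix_add_rdistrib Omega_inv_add)

lemma congruence_vec_scale: "congruence_vec P (a *s x) = a *s congruence_vec P x"
  by (simp add: congruence_vec_def Omega_scale matrix_mul_smat_right matrix_mul_smat_left Omega_inv_smat)

lemma congruence_vec_in_Fq4: "r \<in> Fq4 q \<Longrightarrow> congruence_vec P r \<in> Fq4 q"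
  unfolding congruence_vec_def by (intro Omega_inv_in_Fq4 congruence_in_H2 Omega_in_H2)

lemma Omega_congruence_vec: "Omega ii (congruence_vec P r) = P ** Omega ii r ** adjm q P"
  by (simp add: congruence_vec_def)

lemma mink_congruence_vec:
  "mink (congruence_vec P r1) (congruence_vec P r2) = det P * cnj q (det P) * mink r1 r2"
proof (rule mink_polarization[OF two_neq_zero congruence_vec_add])
  fix r
  have "mink (congruence_vec P r) (congruence_vec P r) = det (P ** Omega ii r ** adjm q P)"
    by (simp add: det_Omega[symmetric] Omega_congruence_vec)
  then show "mink (congruence_vec P r) (congruence_vec P r) = det P * cnj q (det P) * mink r r"
    by (simp add: det_mul det_adjm det_Omega)
qed

lemma psi_congruence:
  assumes Psi: "\<forall>A \<in> H2 q. Psi A = P ** A ** adjm q P"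
    and \<alpha>: "\<alpha> \<in> Fq q" "\<alpha> \<noteq> 0" and norm: "det P * cnj q (det P) = \<alpha>\<^sup>2 * \<kappa>"
  shows "\<exists>K. (\<forall>i j. K $ i $ j \<in> Fq q) \<and> (\<forall>r1 r2. mink (K *v r1) (K *v r2) = \<kappa> * mink r1 r2)
    \<and> (\<forall>r \<in> Fq4 q. psi_of q ii Psi r = \<alpha> *s (K *v r))"
proof (intro exI conjI allI ballI)
  define G where "G r = (1 / \<alpha>) *s congruence_vec P r" for r
  have G_matrix: "matrix G *v r = (1 / \<alpha>) *s congruence_vec P r" for r
    by (simp add: matrix_works_additive_homogeneous G_def congruence_vec_add congruence_vec_scale
        vec_eq_iff algebra_simps)
  show "matrix G $ i $ j \<in> Fq q" for i j
  proof -
    have "axis j (1::'k) \<in> Fq4 q"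
      by (simp add: Fq4_def axis_def)
    then have "congruence_vec P (axis j 1) \<in> Fq4 q"
      by (rule congruence_vec_in_Fq4)
    then show ?thesis
      using \<alpha>(1) by (simp add: matrix_def G_def Fq4_def)
  qed
  show "mink (matrix G *v r1) (matrix G *v r2) = \<kappa> * mink r1 r2" for r1 r2
    using \<alpha>(2) by (simp add: G_matrix mink_scale mink_congruence_vec norm field_simps power2_eq_square)
  show "psi_of q ii Psi r = \<alpha> *s (matrix G *v r)" if r: "r \<in> Fq4 q" for r
  proof (rule psi_of_eqI[OF r])
    show "\<alpha> *s (matrix G *v r) \<in> Fq4 q"
      using congruence_vec_in_Fq4[OF r] \<alpha>(2) by (simp add: G_matrix)
    show "Psi (Omega ii r) = Omega ii (\<alpha> *s (matrix G *v r))"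
      using Psi Omega_in_H2[OF r] \<alpha>(2) by (simp add: G_matrix Omega_congruence_vec)
  qed
qed

lemma card_nonzero_Fq_eq_twice_squares:
  "card (Fq q - {0::'k}) = 2 * card ((\<lambda>x. x\<^sup>2) ` (Fq q - {0::'k}))"
proof -
  define G where "G = Fq q - {0::'k}"
  define S where "S = (\<lambda>x. x\<^sup>2) ` G"
  have fiber: "card {x \<in> G. x\<^sup>2 = y} = 2" if y: "y \<in> S" for y
  proof -
    obtain z where z: "z \<in> G" "y = z\<^sup>2"
      using y unfolding S_def by blast
    then have "{x \<in> G. x\<^sup>2 = y} = {z, -z}"
      by (auto simp: G_def power2_eq_iff)
    moreover have "z \<noteq> -z"
      using z two_neq_zero by (auto simp: G_def)
    ultimately show ?thesis by simp
  qed
  have "(\<Union>y\<in>S. {x \<in> G. x\<^sup>2 = y}) = G"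
    by (auto simp: S_def)
  then have "card G = card (\<Union>y\<in>S. {x \<in> G. x\<^sup>2 = y})"
    by simp
  also have "\<dots> = (\<Sum>y\<in>S. card {x \<in> G. x\<^sup>2 = y})"
    by (rule card_UN_disjoint) auto
  also have "\<dots> = 2 * card S"
    using fiber by simp
  finally show ?thesis
    by (simp add: G_def S_def)
qed

lemma neg_one_not_square_Fq: "\<not> (\<exists>z \<in> Fq q. -1 = (z::'k)\<^sup>2)"
proof
  assume "\<exists>z \<in> Fq q. -1 = (z::'k)\<^sup>2"
  then obtain z :: 'k where "z \<in> Fq q" and "-1 = z\<^sup>2"
    by blast
  moreover from this(2) have "z\<^sup>2 = ii\<^sup>2"
    using ii_squared by simp
  ultimately have "ii \<in> Fq q"
    by (metis Fq_minus minus_minus power2_eq_iff)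
  then show False
    using ii_notin_Fq by simp
qed

text \<open>Multiplication by a nonsquare maps the squares of \<open>\<bbbF>\<^sub>q\<^sup>*\<close> injectively into the
  nonsquares, which are equally many; so it hits the nonsquare \<open>-1\<close>.\<close>

lemma nonsquare_Fq_eq_neg_square:
  fixes N :: 'k
  assumes N: "N \<in> Fq q" "N \<noteq> 0" and nonsquare: "\<not> (\<exists>s \<in> Fq q. N = s\<^sup>2)"
  shows "\<exists>a \<in> Fq q. a \<noteq> 0 \<and> N = a\<^sup>2 * (-1)"
proof -
  define G where "G = Fq q - {0::'k}"
  define S where "S = (\<lambda>x. x\<^sup>2) ` G"
  define T where "T = (\<lambda>x. N * x) ` S"
  have "T \<subseteq> G - S"
  proof
    fix t
    assume "t \<in> T"
    then obtain z where z: "z \<in> G" "t = N * z\<^sup>2"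
      by (auto simp: T_def S_def)
    have "t \<notin> S"
    proof
      assume "t \<in> S"
      then obtain w where "w \<in> G" "t = w\<^sup>2"
        by (auto simp: S_def)
      then have "N = (w / z)\<^sup>2" and "w / z \<in> Fq q"
        using z by (auto simp: G_def power_divide field_simps)
      then show False
        using nonsquare by blast
    qed
    then show "t \<in> G - S"
      using z N by (auto simp: G_def)
  qed
  moreover have "card T = card (G - S)"
  proof -
    have "card T = card S"
      unfolding T_def using N(2) by (intro card_image inj_onI) simp
    also have "\<dots> = card (G - S)"
      using card_nonzero_Fq_eq_twice_squares by (simp add: card_Diff_subset G_def S_def image_subset_iff)
    finally show ?thesis .
  qed
  ultimately have "T = G - S"
    by (intro card_subset_eq) auto
  moreover have "-1 \<in> G - S"
    using neg_one_not_square_Fq by (auto simp: G_def S_def)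
  ultimately obtain z where z: "z \<in> G" "-1 = N * z\<^sup>2"
    unfolding T_def S_def by blast
  show ?thesis
  proof (intro bexI conjI)
    show "1 / z \<in> Fq q" and "1 / z \<noteq> 0"
      using z(1) by (auto simp: G_def)
    show "N = (1 / z)\<^sup>2 * (-1)"
      using z by (auto simp: G_def field_simps power2_eq_square)
  qed
qed

lemma psi_congruence_square:
  assumes "invertible P" and "\<exists>s \<in> Fq q. det P * cnj q (det P) = s\<^sup>2"
    and "\<forall>A \<in> H2 q. Psi A = P ** A ** adjm q P"
  shows "\<exists>L \<alpha>. lorentz q L \<and> \<alpha> \<in> Fq q \<and> \<alpha> \<noteq> 0 \<and> (\<forall>r \<in> Fq4 q. psi_of q ii Psi r = \<alpha> *s (L *v r))"
proof -
  obtain s where s: "s \<in> Fq q" "det P * cnj q (det P) = s\<^sup>2"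
    using assms(2) by blast
  have s0: "s \<noteq> 0"
    using norm_neq_zero[of "det P"] assms(1) s(2) by (auto simp: invertible_det_nz)
  obtain K where K: "\<forall>i j. K $ i $ j \<in> Fq q" "\<forall>r1 r2. mink (K *v r1) (K *v r2) = 1 * mink r1 r2"
      "\<forall>r \<in> Fq4 q. psi_of q ii Psi r = s *s (K *v r)"
    using psi_congruence[OF assms(3) s(1) s0, of 1] s(2) by auto
  then have "lorentz q K"
    by (simp add: lorentz_def)
  then show ?thesis
    using K(3) s(1) s0 by blast
qed

lemma psi_congruence_nonsquare:
  assumes "invertible P" and "\<not> (\<exists>s \<in> Fq q. det P * cnj q (det P) = s\<^sup>2)"
    and "\<forall>A \<in> H2 q. Psi A = P ** A ** adjm q P"
  shows "\<exists>K \<alpha>. anti_lorentz q K \<and> \<alpha> \<in> Fq q \<and> \<alpha> \<noteq> 0 \<and> (\<forall>r \<in> Fq4 q. psi_of q ii Psi r = \<alpha> *s (K *v r))"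
proof -
  obtain a where a: "a \<in> Fq q" "a \<noteq> 0" "det P * cnj q (det P) = a\<^sup>2 * (-1)"
    using nonsquare_Fq_eq_neg_square[OF norm_in_Fq norm_neq_zero assms(2)] assms(1)
    by (auto simp: invertible_det_nz)
  obtain K where K: "\<forall>i j. K $ i $ j \<in> Fq q" "\<forall>r1 r2. mink (K *v r1) (K *v r2) = -1 * mink r1 r2"
      "\<forall>r \<in> Fq4 q. psi_of q ii Psi r = a *s (K *v r)"
    using psi_congruence[OF assms(3) a] by auto
  then have "anti_lorentz q K"
    by (simp add: anti_lorentz_def)
  then show ?thesis
    using K(3) a by blast
qed

end

theorem lemma4p8:
  fixes q :: nat and ii :: "'k::{field,finite}"
  assumes "prime_power q" and "q mod 4 = 3" and "CARD('k) = q ^ 2"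
    and "ii ^ 2 = -1"
  shows
    "(\<forall>(Psi :: 'k^2^2 \<Rightarrow> 'k^2^2) B. B \<in> H2 q \<and> (\<forall>A \<in> H2 q. Psi A = A + B) \<longrightarrow>
        (\<exists>r0 \<in> Fq4 q. \<forall>r \<in> Fq4 q. psi_of q ii Psi r = r + r0))
   \<and> (\<forall>Phi :: 'k^2^2 \<Rightarrow> 'k^2^2. (\<forall>A \<in> HGL2 q. Phi A = matrix_inv A) \<longrightarrow>
        (\<exists>L. lorentz q L \<and> (\<forall>r \<in> Fq4 q - C0 q. phi_of q ii Phi r = (1 / mink r r) *s (L *v r))))
   \<and> (\<forall>(Psi :: 'k^2^2 \<Rightarrow> 'k^2^2) \<sigma>. field_aut \<sigma> \<and> (\<forall>A \<in> H2 q. Psi A = (\<chi> i j. \<sigma> (A $ i $ j))) \<longrightarrow>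
        (\<exists>L \<tau>. lorentz q L \<and> Fq_aut q \<tau> \<and>
           (\<forall>r \<in> Fq4 q. psi_of q ii Psi r = L *v (\<chi> i. \<tau> (r $ i)))))
   \<and> (\<forall>(Psi :: 'k^2^2 \<Rightarrow> 'k^2^2) P. invertible P \<and> (\<exists>s \<in> Fq q. det P * cnj q (det P) = s ^ 2)
          \<and> (\<forall>A \<in> H2 q. Psi A = P ** A ** adjm q P) \<longrightarrow>
        (\<exists>L \<alpha>. lorentz q L \<and> \<alpha> \<in> Fq q \<and> \<alpha> \<noteq> 0 \<and> (\<forall>r \<in> Fq4 q. psi_of q ii Psi r = \<alpha> *s (L *v r))))
   \<and> (\<forall>(Psi :: 'k^2^2 \<Rightarrow> 'k^2^2) P. invertible P \<and> \<not> (\<exists>s \<in> Fq q. det P * cnj q (det P) = s ^ 2)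
          \<and> (\<forall>A \<in> H2 q. Psi A = P ** A ** adjm q P) \<longrightarrow>
        (\<exists>K \<alpha>. anti_lorentz q K \<and> \<alpha> \<in> Fq q \<and> \<alpha> \<noteq> 0 \<and> (\<forall>r \<in> Fq4 q. psi_of q ii Psi r = \<alpha> *s (K *v r))))"
proof -
  interpret hermitian_Fq2 q ii
    using assms by unfold_locales
  show ?thesis
    by (intro conjI allI impI; (elim conjE)?;
        rule psi_translation phi_matrix_inv psi_entrywise_aut psi_congruence_square
          psi_congruence_nonsquare; assumption)
qed

end
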